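(* A restriction semigroup is isomorphic (as a $(2,1,1)$-algebra) to a $W$-product $W(T,Y)$ of a semilattice $Y$ by a monoid $T$ if and only if it is proper and its underlying left partial action is an action (i.e. defined everywhere). In particular, a restriction semigroup is isomorphic to a semidirect product $T\ltimes Y$ of a semilattice by a monoid if and only if it is proper and its underlying left partial action is an action by order-automorphisms, equivalently, both its underlying left and right partial actions are (everywhere defined) actions.
   Context: A restriction semigroup is an algebra $(S,\cdot,{}^*,{}^+)$ where $(S,\cdot)$ is a semigroup and the identities $xx^*=x$, $x^*y^*=y^*x^*$, $(xy^* )^*=x^*y^*$, $x^*y=y(xy)^*$, $x^+x=x$, $x^+y^+=y^+x^+$, $(x^+y)^+=x^+y^+$, $xy^+=(xy)^+x$, $(x^+)^*=x^+$, $(x^* )^+=x^*$ hold. $P(S)=\{x^*\colon x\in S\}$ is the semilattice of projections; $\sigma$ is the least congruence identifying all projections; $S$ is proper if ($a^*=b^*$, $a\,\sigma\, b$) $\Rightarrow a=b$ and ($a^+=b^+$, $a\,\sigma\, b$) $\Rightarrow a=b$. For a proper restriction semigroup $S$, the underlying left partial action of $T=S/\sigma$ on $E=P(S)$ is: $t\cdot e$ is defined iff there is $a\in t$ with $a^*\ge e$, and then $t\cdot e=(ae)^+$. The underlying right partial action $\circ$ is its reverse: $e\circ t$ is defined iff $e=t\cdot f$ for some $f$ and then $e\circ t=f$. $W$-product: if a monoid $T$ acts on the left on a semilattice $Y$ (written $t*y$) by order-embeddings such that each range $t*Y$ is an order ideal of $Y$, then $W(T,Y)=\{(t*y,t)\colon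 y\in Y,t\in T\}$ with $(t*y,t)(s*x,s)=(t*y\wedge(ts)*x,ts)$, $(t*y,t)^*=(y,1)$, $(t*y,t)^+=(t*y,1)$. If the action is by order-automorphisms, $W(T,Y)$ is called the semidirect product $T\ltimes Y$ (as a set it is $Y\times T$). *)

theory Defs
  imports Main
begin

record 'a r_alg =
  carr :: "'a set"
  mul  :: "'a \<Rightarrow> 'a \<Rightarrow> 'a"
  st   :: "'a \<Rightarrow> 'a"
  pl   :: "'a \<Rightarrow> 'a"

definition restriction_semigroup :: "('a, 'b) r_alg_scheme \<Rightarrow> bool" where
  "restriction_semigroup S \<longleftrightarrow>
     (\<forall>x\<in>carr S. \<forall>y\<in>carr S. mul S x y \<in> carr S) \<and>
     (\<forall>x\<in>carr S. st S x \<in> carr S \<and> pl S x \<in> carr S) \<and>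
     (\<forall>x\<in>carr S. \<forall>y\<in>carr S. \<forall>z\<in>carr S. mul S (mul S x y) z = mul S x (mul S y z)) \<and>
     (\<forall>x\<in>carr S. \<forall>y\<in>carr S.
        mul S x (st S x) = x \<and>
        mul S (st S x) (st S y) = mul S (st S y) (st S x) \<and>
        st S (mul S x (st S y)) = mul S (st S x) (st S y) \<and>
        mul S (st S x) y = mul S y (st S (mul S x y)) \<and>
        mul S (pl S x) x = x \<and>
        mul S (pl S x) (pl S y) = mul S (pl S y) (pl S x) \<and>
        pl S (mul S (pl S x) y) = mul S (pl S x) (pl S y) \<and>
        mul S x (pl S y) = mul S (pl S (mul S x y)) x \<and>
        st S (pl S x) = pl S x \<and>
        pl S (st S x) = st S x)"

definition projections :: "('a, 'b) r_alg_scheme \<Rightarrow> 'a set" where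
  "projections S = st S ` carr S"

definition proj_le :: "('a, 'b) r_alg_scheme \<Rightarrow> 'a \<Rightarrow> 'a \<Rightarrow> bool" where
  "proj_le S e f \<longleftrightarrow> e = mul S e f"

definition congruence :: "('a, 'b) r_alg_scheme \<Rightarrow> ('a \<times> 'a) set \<Rightarrow> bool" where
  "congruence S R \<longleftrightarrow> equiv (carr S) R \<and>
     (\<forall>a b c d. (a, b) \<in> R \<longrightarrow> (c, d) \<in> R \<longrightarrow> (mul S a c, mul S b d) \<in> R) \<and>
     (\<forall>a b. (a, b) \<in> R \<longrightarrow> (st S a, st S b) \<in> R \<and> (pl S a, pl S b) \<in> R)"

definition sigma :: "('a, 'b) r_alg_scheme \<Rightarrow> ('a \<times> 'a) set" where
  "sigma S = \<Inter> {R. congruence S R \<and> projections S \<times> projections S \<subseteq> R}"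

definition proper :: "('a, 'b) r_alg_scheme \<Rightarrow> bool" where
  "proper S \<longleftrightarrow> (\<forall>a\<in>carr S. \<forall>b\<in>carr S.
     (st S a = st S b \<and> (a, b) \<in> sigma S \<longrightarrow> a = b) \<and>
     (pl S a = pl S b \<and> (a, b) \<in> sigma S \<longrightarrow> a = b))"

definition sigma_classes :: "('a, 'b) r_alg_scheme \<Rightarrow> 'a set set" where
  "sigma_classes S = carr S // sigma S"

definition lpa_defined :: "('a, 'b) r_alg_scheme \<Rightarrow> 'a set \<Rightarrow> 'a \<Rightarrow> bool" where
  "lpa_defined S t e \<longleftrightarrow> (\<exists>a\<in>t. proj_le S e (st S a))"

definition lpa :: "('a, 'b) r_alg_scheme \<Rightarrow> 'a set \<Rightarrow> 'a \<Rightarrow> 'a" where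
  "lpa S t e = pl S (mul S (SOME a. a \<in> t \<and> proj_le S e (st S a)) e)"

text \<open>Underlying right partial action: e o t defined iff e = t . f for some f (then e o t = f).\<close>
definition rpa_defined :: "('a, 'b) r_alg_scheme \<Rightarrow> 'a \<Rightarrow> 'a set \<Rightarrow> bool" where
  "rpa_defined S e t \<longleftrightarrow> (\<exists>f\<in>projections S. lpa_defined S t f \<and> lpa S t f = e)"

definition left_action_total :: "('a, 'b) r_alg_scheme \<Rightarrow> bool" where
  "left_action_total S \<longleftrightarrow>
     (\<forall>t\<in>sigma_classes S. \<forall>e\<in>projections S. lpa_defined S t e)"

definition right_action_total :: "('a, 'b) r_alg_scheme \<Rightarrow> bool" where
  "right_action_total S \<longleftrightarrow>
     (\<forall>t\<in>sigma_classes S. \<forall>e\<in>projections S. rpa_defined S e t)"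

definition left_action_by_order_automorphisms :: "('a, 'b) r_alg_scheme \<Rightarrow> bool" where
  "left_action_by_order_automorphisms S \<longleftrightarrow> left_action_total S \<and>
     (\<forall>t\<in>sigma_classes S.
        bij_betw (lpa S t) (projections S) (projections S) \<and>
        (\<forall>e\<in>projections S. \<forall>f\<in>projections S.
           proj_le S e f \<longleftrightarrow> proj_le S (lpa S t e) (lpa S t f)))"

text \<open>Data: monoid (T, tm, u), semilattice (Y, meet) with order y <= z iff meet y z = y,
  and a left action act of T on Y by order-embeddings with order-ideal ranges.\<close>
definition W_data :: "'t set \<Rightarrow> ('t \<Rightarrow> 't \<Rightarrow> 't) \<Rightarrow> 't \<Rightarrow> 'y set \<Rightarrow> ('y \<Rightarrow> 'y \<Rightarrow> 'y)
                       \<Rightarrow> ('t \<Rightarrow> 'y \<Rightarrow> 'y) \<Rightarrow> bool" where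
  "W_data T tm u Y meet act \<longleftrightarrow>
     u \<in> T \<and>
     (\<forall>t\<in>T. \<forall>s\<in>T. tm t s \<in> T) \<and>
     (\<forall>t\<in>T. \<forall>s\<in>T. \<forall>r\<in>T. tm (tm t s) r = tm t (tm s r)) \<and>
     (\<forall>t\<in>T. tm u t = t \<and> tm t u = t) \<and>
     (\<forall>x\<in>Y. \<forall>y\<in>Y. meet x y \<in> Y) \<and>
     (\<forall>x\<in>Y. \<forall>y\<in>Y. \<forall>z\<in>Y. meet (meet x y) z = meet x (meet y z)) \<and>
     (\<forall>x\<in>Y. \<forall>y\<in>Y. meet x y = meet y x) \<and>
     (\<forall>x\<in>Y. meet x x = x) \<and>
     (\<forall>t\<in>T. \<forall>y\<in>Y. act t y \<in> Y) \<and>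
     (\<forall>y\<in>Y. act u y = y) \<and>
     (\<forall>t\<in>T. \<forall>s\<in>T. \<forall>y\<in>Y. act (tm t s) y = act t (act s y)) \<and>
     (\<forall>t\<in>T. \<forall>y\<in>Y. \<forall>z\<in>Y. meet y z = y \<longleftrightarrow> meet (act t y) (act t z) = act t y) \<and>
     (\<forall>t\<in>T. \<forall>y\<in>Y. \<forall>z\<in>Y. meet z (act t y) = z \<longrightarrow> z \<in> act t ` Y)"

definition SD_data :: "'t set \<Rightarrow> ('t \<Rightarrow> 't \<Rightarrow> 't) \<Rightarrow> 't \<Rightarrow> 'y set \<Rightarrow> ('y \<Rightarrow> 'y \<Rightarrow> 'y)
                       \<Rightarrow> ('t \<Rightarrow> 'y \<Rightarrow> 'y) \<Rightarrow> bool" where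
  "SD_data T tm u Y meet act \<longleftrightarrow> W_data T tm u Y meet act \<and> (\<forall>t\<in>T. act t ` Y = Y)"

definition W_alg :: "'t set \<Rightarrow> ('t \<Rightarrow> 't \<Rightarrow> 't) \<Rightarrow> 't \<Rightarrow> 'y set \<Rightarrow> ('y \<Rightarrow> 'y \<Rightarrow> 'y)
                       \<Rightarrow> ('t \<Rightarrow> 'y \<Rightarrow> 'y) \<Rightarrow> ('y \<times> 't) r_alg" where
  "W_alg T tm u Y meet act =
     \<lparr> carr = {(act t y, t) | y t. y \<in> Y \<and> t \<in> T},
       mul = (\<lambda>(a, t) (b, s). (meet a (act t b), tm t s)),
       st = (\<lambda>(a, t). (THE y. y \<in> Y \<and> act t y = a, u)),
       pl = (\<lambda>(a, t). (a, u)) \<rparr>"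

definition isomorphic :: "('a, 'c) r_alg_scheme \<Rightarrow> ('b, 'd) r_alg_scheme \<Rightarrow> bool" where
  "isomorphic S R \<longleftrightarrow> (\<exists>f. bij_betw f (carr S) (carr R) \<and>
     (\<forall>x\<in>carr S. \<forall>y\<in>carr S. f (mul S x y) = mul R (f x) (f y)) \<and>
     (\<forall>x\<in>carr S. f (st S x) = st R (f x) \<and> f (pl S x) = pl R (f x)))"

text \<open>Without loss of
  generality T and Y are taken with carriers in the types 'a set and 'a
  (T is isomorphic to S/sigma and Y to P(S) for any such representation).\<close>
definition iso_to_W_product :: "'a r_alg \<Rightarrow> bool" where
  "iso_to_W_product S \<longleftrightarrow> (\<exists>(T :: 'a set set) tm u (Y :: 'a set) meet act.
      W_data T tm u Y meet act \<and> isomorphic S (W_alg T tm u Y meet act))"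

definition iso_to_semidirect_product :: "'a r_alg \<Rightarrow> bool" where
  "iso_to_semidirect_product S \<longleftrightarrow> (\<exists>(T :: 'a set set) tm u (Y :: 'a set) meet act.
      SD_data T tm u Y meet act \<and> isomorphic S (W_alg T tm u Y meet act))"

end

theory Submission
  imports Defs
begin

text \<open>
  In a restriction semigroup \<open>\<sigma>\<close> is the relation \<open>a \<sigma> b \<longleftrightarrow> e a = e b\<close> for some projection
  \<open>e\<close>. Properness makes \<open>\<sigma>\<close>-related elements compatible (\<open>a b\<^sup>* = b a\<^sup>*\<close>, \<open>a\<^sup>+ b = b\<^sup>+ a\<close>),
  so the partial action \<open>t \<cdot> e = (a e)\<^sup>+\<close> does not depend on the choice of \<open>a \<in> t\<close> with
  \<open>e \<le> a\<^sup>*\<close>; when it is total it is an action by order embeddings with order-ideal ranges, and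
  \<open>a \<mapsto> (a\<^sup>+, [a])\<close> is an isomorphism onto \<open>W(S/\<sigma>, P(S))\<close>. Conversely, in a \<open>W\<close>-product
  two elements are \<open>\<sigma>\<close>-related iff they have the same \<open>T\<close>-component, which yields properness
  and totality. The action is by automorphisms iff each \<open>t \<cdot> _\<close> is onto \<open>P(S)\<close>, i.e. iff the
  right partial action is total as well.
\<close>

locale restriction_alg =
  fixes S :: "('a, 'b) r_alg_scheme"
  assumes restriction: "restriction_semigroup S"
begin

abbreviation C where "C \<equiv> carr S"
abbreviation mult (infixl "\<cdot>" 70) where "x \<cdot> y \<equiv> mul S x y"
abbreviation P where "P \<equiv> projections S"

lemma mul_closed [simp, intro]: "x \<in> C \<Longrightarrow> y \<in> C \<Longrightarrow> x \<cdot> y \<in> C"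
  and st_closed [simp, intro]: "x \<in> C \<Longrightarrow> st S x \<in> C"
  and pl_closed [simp, intro]: "x \<in> C \<Longrightarrow> pl S x \<in> C"
  and mul_assoc [simp]: "x \<in> C \<Longrightarrow> y \<in> C \<Longrightarrow> z \<in> C \<Longrightarrow> (x \<cdot> y) \<cdot> z = x \<cdot> (y \<cdot> z)"
  using restriction unfolding restriction_semigroup_def by blast+

lemma
  assumes "x \<in> C" "y \<in> C"
  shows mul_st: "x \<cdot> st S x = x"
    and st_comm: "st S x \<cdot> st S y = st S y \<cdot> st S x"
    and st_mul_st: "st S (x \<cdot> st S y) = st S x \<cdot> st S y"
    and st_mul_ample: "st S x \<cdot> y = y \<cdot> st S (x \<cdot> y)"
    and pl_mul: "pl S x \<cdot> x = x"
    and pl_comm: "pl S x \<cdot> pl S y = pl S y \<cdot> pl S x"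
    and pl_pl_mul: "pl S (pl S x \<cdot> y) = pl S x \<cdot> pl S y"
    and mul_pl_ample: "x \<cdot> pl S y = pl S (x \<cdot> y) \<cdot> x"
    and st_pl: "st S (pl S x) = pl S x"
    and pl_st: "pl S (st S x) = st S x"
  using restriction assms unfolding restriction_semigroup_def by blast+

lemma st_st: "x \<in> C \<Longrightarrow> st S (st S x) = st S x"
  using pl_st[of x x] st_pl[of "st S x" "st S x"] by simp

lemma projections_eq: "P = {e \<in> C. st S e = e}"
  unfolding projections_def using st_st by force

lemma proj_closed [simp, intro]: "e \<in> P \<Longrightarrow> e \<in> C"
  and proj_st [simp]: "e \<in> P \<Longrightarrow> st S e = e"
  by (auto simp: projections_eq)

lemma proj_pl [simp]: "e \<in> P \<Longrightarrow> pl S e = e"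
  using pl_st[of e e] by simp

lemma st_in_proj [simp, intro]: "x \<in> C \<Longrightarrow> st S x \<in> P"
  unfolding projections_def by blast

lemma pl_in_proj [simp, intro]: "x \<in> C \<Longrightarrow> pl S x \<in> P"
  using st_pl[of x x] unfolding projections_eq by simp

lemma proj_le_iff: "proj_le S e f \<longleftrightarrow> e \<cdot> f = e"
  unfolding proj_le_def by (rule eq_commute)

lemma proj_idem [simp]: "e \<in> P \<Longrightarrow> e \<cdot> e = e"
  using mul_st[of e e] by simp

lemma proj_comm: "e \<in> P \<Longrightarrow> f \<in> P \<Longrightarrow> e \<cdot> f = f \<cdot> e"
  using st_comm[of e f] by simp

lemma proj_mul_closed [simp, intro]: "e \<in> P \<Longrightarrow> f \<in> P \<Longrightarrow> e \<cdot> f \<in> P"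
  using st_mul_st[of e f] unfolding projections_eq by simp

lemma proj_left_comm: "e \<in> P \<Longrightarrow> f \<in> P \<Longrightarrow> x \<in> C \<Longrightarrow> e \<cdot> (f \<cdot> x) = f \<cdot> (e \<cdot> x)"
  by (metis mul_assoc proj_closed proj_comm)

lemma proj_left_idem: "e \<in> P \<Longrightarrow> x \<in> C \<Longrightarrow> e \<cdot> (e \<cdot> x) = e \<cdot> x"
  by (metis mul_assoc proj_closed proj_idem)

lemma st_mul_proj: "x \<in> C \<Longrightarrow> e \<in> P \<Longrightarrow> st S (x \<cdot> e) = st S x \<cdot> e"
  using st_mul_st[of x e] by simp

lemma pl_proj_mul: "x \<in> C \<Longrightarrow> e \<in> P \<Longrightarrow> pl S (e \<cdot> x) = e \<cdot> pl S x"
  using pl_pl_mul[of e x] by simp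

lemma st_mul_le: "x \<in> C \<Longrightarrow> y \<in> C \<Longrightarrow> st S (x \<cdot> y) \<cdot> st S y = st S (x \<cdot> y)"
  using st_mul_st[of "x \<cdot> y" y] mul_st[of y y] by simp

lemma pl_mul_le: "x \<in> C \<Longrightarrow> y \<in> C \<Longrightarrow> pl S x \<cdot> pl S (x \<cdot> y) = pl S (x \<cdot> y)"
  using pl_pl_mul[of x "x \<cdot> y"] pl_mul[of x x] by (metis mul_assoc mul_closed pl_closed)

lemma pl_mul_pl: "x \<in> C \<Longrightarrow> y \<in> C \<Longrightarrow> pl S (x \<cdot> pl S y) = pl S (x \<cdot> y)"
  by (metis mul_closed pl_closed pl_comm pl_mul_le pl_pl_mul mul_pl_ample)

lemma st_st_mul: "x \<in> C \<Longrightarrow> y \<in> C \<Longrightarrow> st S (st S x \<cdot> y) = st S (x \<cdot> y)"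
  by (metis mul_closed st_closed st_comm st_mul_le st_mul_st st_mul_ample)

lemma proj_mul_absorb: "x \<in> C \<Longrightarrow> e \<in> P \<Longrightarrow> e \<cdot> pl S x = pl S x \<Longrightarrow> e \<cdot> x = x"
  by (metis mul_assoc pl_closed pl_mul proj_closed)

lemma mul_proj_absorb: "x \<in> C \<Longrightarrow> e \<in> P \<Longrightarrow> st S x \<cdot> e = st S x \<Longrightarrow> x \<cdot> e = x"
  by (metis mul_assoc st_closed mul_st proj_closed)

lemma st_mul_if_pl_below_st:
  "a \<in> C \<Longrightarrow> x \<in> C \<Longrightarrow> st S a \<cdot> pl S x = pl S x \<Longrightarrow> st S (a \<cdot> x) = st S x"
  by (metis st_st_mul proj_mul_absorb st_in_proj)

lemma st_mul_proj_below: "a \<in> C \<Longrightarrow> e \<in> P \<Longrightarrow> e \<cdot> st S a = e \<Longrightarrow> st S (a \<cdot> e) = e"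
  using st_mul_proj[of a e] proj_comm[of e "st S a"] by simp

definition sigma_rel :: "('a \<times> 'a) set" where
  "sigma_rel = {(a, b). a \<in> C \<and> b \<in> C \<and> (\<exists>e\<in>P. e \<cdot> a = e \<cdot> b)}"

lemma sigma_rel_equiv: "equiv C sigma_rel"
proof (rule equivI)
  show "sigma_rel \<subseteq> C \<times> C" "refl_on C sigma_rel"
    unfolding sigma_rel_def refl_on_def by auto
  show "sym sigma_rel" unfolding sym_def sigma_rel_def by (clarsimp, metis)
  show "trans sigma_rel" unfolding trans_def
  proof (intro allI impI)
    fix a b c assume "(a, b) \<in> sigma_rel" "(b, c) \<in> sigma_rel"
    then obtain e f where abc: "a \<in> C" "b \<in> C" "c \<in> C" and ef: "e \<in> P" "f \<in> P"
      and eq: "e \<cdot> a = e \<cdot> b" "f \<cdot> b = f \<cdot> c"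
      unfolding sigma_rel_def by auto
    have "(e \<cdot> f) \<cdot> a = f \<cdot> (e \<cdot> a)" using abc ef proj_left_comm by simp
    also have "\<dots> = e \<cdot> (f \<cdot> b)" using abc ef eq proj_left_comm by simp
    also have "\<dots> = (e \<cdot> f) \<cdot> c" using abc ef eq by simp
    finally show "(a, c) \<in> sigma_rel" unfolding sigma_rel_def using abc ef by blast
  qed
qed

lemma sigma_rel_proj: "e \<in> P \<Longrightarrow> f \<in> P \<Longrightarrow> (e, f) \<in> sigma_rel"
proof -
  assume ef: "e \<in> P" "f \<in> P"
  have "(e \<cdot> f) \<cdot> e = e \<cdot> f" using ef proj_comm proj_left_idem by simp
  moreover have "(e \<cdot> f) \<cdot> f = e \<cdot> f" using ef by simp
  ultimately show ?thesis unfolding sigma_rel_def using ef by (auto intro!: bexI[of _ "e \<cdot> f"])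
qed

lemma sigma_rel_mul:
  assumes "(a, b) \<in> sigma_rel" "(c, d) \<in> sigma_rel"
  shows "(a \<cdot> c, b \<cdot> d) \<in> sigma_rel"
proof -
  obtain e f where abcd: "a \<in> C" "b \<in> C" "c \<in> C" "d \<in> C" and ef: "e \<in> P" "f \<in> P"
    and eq: "e \<cdot> a = e \<cdot> b" "f \<cdot> c = f \<cdot> d"
    using assms unfolding sigma_rel_def by auto
  \<comment> \<open>\<open>(a f)\<^sup>+ a = a f\<close> lets the witness \<open>e (a f)\<^sup>+\<close> move \<open>f\<close> past \<open>a\<close>.\<close>
  define g where "g = e \<cdot> pl S (a \<cdot> f)"
  have g_P: "g \<in> P" unfolding g_def using abcd ef by simp
  have "g = pl S (e \<cdot> a \<cdot> f)" unfolding g_def using abcd ef pl_proj_mul by simp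
  also have "\<dots> = e \<cdot> pl S (b \<cdot> f)" using abcd ef eq pl_proj_mul[of "b \<cdot> f" e] by simp
  finally have g_b: "g = e \<cdot> pl S (b \<cdot> f)" .
  have pl_absorb: "pl S (x \<cdot> f) \<cdot> (x \<cdot> y) = x \<cdot> (f \<cdot> y)" if "x \<in> C" "y \<in> C" for x y
  proof -
    have "pl S (x \<cdot> f) \<cdot> (x \<cdot> y) = (pl S (x \<cdot> f) \<cdot> x) \<cdot> y" using that ef by simp
    also have "\<dots> = x \<cdot> (f \<cdot> y)" using mul_pl_ample[of x f] that ef by simp
    finally show ?thesis .
  qed
  have "g \<cdot> (a \<cdot> c) = (e \<cdot> a) \<cdot> (f \<cdot> c)" unfolding g_def using abcd ef pl_absorb by simp
  also have "\<dots> = (e \<cdot> b) \<cdot> (f \<cdot> d)" using eq by simp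
  also have "\<dots> = g \<cdot> (b \<cdot> d)" unfolding g_b using abcd ef pl_absorb by simp
  finally show ?thesis unfolding sigma_rel_def using abcd g_P by blast
qed

lemma sigma_rel_st: "(a, b) \<in> sigma_rel \<Longrightarrow> (st S a, st S b) \<in> sigma_rel"
proof -
  assume "(a, b) \<in> sigma_rel"
  then obtain e where ab: "a \<in> C" "b \<in> C" and e: "e \<in> P" "e \<cdot> a = e \<cdot> b"
    unfolding sigma_rel_def by auto
  have "st S (e \<cdot> a) \<cdot> st S a = st S (e \<cdot> a) \<cdot> st S b"
    using st_mul_le[of e a] st_mul_le[of e b] ab e by simp
  then show ?thesis unfolding sigma_rel_def using ab e by blast
qed

lemma sigma_rel_pl: "(a, b) \<in> sigma_rel \<Longrightarrow> (pl S a, pl S b) \<in> sigma_rel"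
proof -
  assume "(a, b) \<in> sigma_rel"
  then obtain e where ab: "a \<in> C" "b \<in> C" and e: "e \<in> P" "e \<cdot> a = e \<cdot> b"
    unfolding sigma_rel_def by auto
  have "e \<cdot> pl S a = e \<cdot> pl S b" using pl_proj_mul ab e by metis
  then show ?thesis unfolding sigma_rel_def using ab e by blast
qed

lemma sigma_rel_least:
  assumes R: "congruence S R" "P \<times> P \<subseteq> R"
  shows "sigma_rel \<subseteq> R"
proof safe
  fix a b assume ab: "(a, b) \<in> sigma_rel"
  obtain e where abe: "a \<in> C" "b \<in> C" "e \<in> P" and eq: "e \<cdot> a = e \<cdot> b"
    using ab unfolding sigma_rel_def by auto
  have equiv: "equiv C R"
    and R_mul: "\<And>a b c d. (a, b) \<in> R \<Longrightarrow> (c, d) \<in> R \<Longrightarrow> (a \<cdot> c, b \<cdot> d) \<in> R"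
    using R(1) unfolding congruence_def by blast+
  have absorb: "(e \<cdot> x, x) \<in> R" if "x \<in> C" for x
  proof -
    have "(x, x) \<in> R" using equiv that unfolding equiv_def refl_on_def by blast
    moreover have "(e, pl S x) \<in> R" using R(2) abe that by blast
    ultimately have "(e \<cdot> x, pl S x \<cdot> x) \<in> R" using R_mul by blast
    then show ?thesis using pl_mul[of x x] that by simp
  qed
  have "sym R" "trans R" using equiv unfolding equiv_def by blast+
  moreover have "(e \<cdot> b, a) \<in> R" using absorb[of a] abe eq by simp
  ultimately show "(a, b) \<in> R" using absorb[of b] abe by (meson symD transD)
qed

lemma sigma_eq: "sigma S = sigma_rel"
proof -
  have "congruence S sigma_rel"
    unfolding congruence_def using sigma_rel_equiv sigma_rel_mul sigma_rel_st sigma_rel_pl by blast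
  moreover have "P \<times> P \<subseteq> sigma_rel" using sigma_rel_proj by blast
  ultimately show ?thesis unfolding sigma_def using sigma_rel_least by blast
qed

lemma sigma_iff: "(a, b) \<in> sigma S \<longleftrightarrow> a \<in> C \<and> b \<in> C \<and> (\<exists>e\<in>P. e \<cdot> a = e \<cdot> b)"
  unfolding sigma_eq sigma_rel_def by blast

lemma sigma_equiv: "equiv C (sigma S)"
  using sigma_rel_equiv sigma_eq by simp

lemma sigma_closed: "(a, b) \<in> sigma S \<Longrightarrow> a \<in> C" "(a, b) \<in> sigma S \<Longrightarrow> b \<in> C"
  by (auto simp: sigma_iff)

lemma sigma_refl: "a \<in> C \<Longrightarrow> (a, a) \<in> sigma S"
  using sigma_equiv unfolding equiv_def refl_on_def by auto

lemma sigma_sym: "(a, b) \<in> sigma S \<Longrightarrow> (b, a) \<in> sigma S"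
  using sigma_equiv unfolding equiv_def sym_def by auto

lemma sigma_trans: "(a, b) \<in> sigma S \<Longrightarrow> (b, c) \<in> sigma S \<Longrightarrow> (a, c) \<in> sigma S"
  using sigma_equiv unfolding equiv_def trans_def by blast

lemma sigma_mul: "(a, b) \<in> sigma S \<Longrightarrow> (c, d) \<in> sigma S \<Longrightarrow> (a \<cdot> c, b \<cdot> d) \<in> sigma S"
  unfolding sigma_eq by (rule sigma_rel_mul)

lemma sigma_proj: "e \<in> P \<Longrightarrow> f \<in> P \<Longrightarrow> (e, f) \<in> sigma S"
  unfolding sigma_eq by (rule sigma_rel_proj)

lemma sigma_mul_proj: "a \<in> C \<Longrightarrow> e \<in> P \<Longrightarrow> (a \<cdot> e, a) \<in> sigma S"
  using sigma_mul[OF sigma_refl[of a] sigma_proj[of e "st S a"]] mul_st by simp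

lemma sigma_proj_mul: "a \<in> C \<Longrightarrow> e \<in> P \<Longrightarrow> (e \<cdot> a, a) \<in> sigma S"
  using sigma_mul[OF sigma_proj[of e "pl S a"] sigma_refl[of a]] pl_mul by simp

end

locale proper_restriction_alg = restriction_alg +
  assumes proper: "proper S"
begin

lemma proper_st: "(a, b) \<in> sigma S \<Longrightarrow> st S a = st S b \<Longrightarrow> a = b"
  and proper_pl: "(a, b) \<in> sigma S \<Longrightarrow> pl S a = pl S b \<Longrightarrow> a = b"
  using proper sigma_closed unfolding proper_def by blast+

lemma compatible_st:
  assumes ab: "(a, b) \<in> sigma S"
  shows "a \<cdot> st S b = b \<cdot> st S a"
proof (rule proper_st)
  have "a \<in> C" "b \<in> C" using ab sigma_closed by auto
  then show "(a \<cdot> st S b, b \<cdot> st S a) \<in> sigma S"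
    using sigma_mul[OF ab sigma_proj[of "st S b" "st S a"]] by simp
  show "st S (a \<cdot> st S b) = st S (b \<cdot> st S a)"
    using \<open>a \<in> C\<close> \<open>b \<in> C\<close> st_mul_st st_comm by simp
qed

lemma compatible_pl:
  assumes ab: "(a, b) \<in> sigma S"
  shows "pl S a \<cdot> b = pl S b \<cdot> a"
proof (rule proper_pl)
  have "a \<in> C" "b \<in> C" using ab sigma_closed by auto
  then show "(pl S a \<cdot> b, pl S b \<cdot> a) \<in> sigma S"
    using sigma_mul[OF sigma_proj[of "pl S a" "pl S b"] sigma_sym[OF ab]] by simp
  show "pl S (pl S a \<cdot> b) = pl S (pl S b \<cdot> a)"
    using \<open>a \<in> C\<close> \<open>b \<in> C\<close> pl_pl_mul pl_comm by simp
qed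

abbreviation T where "T \<equiv> sigma_classes S"
abbreviation cls where "cls a \<equiv> sigma S `` {a}"

lemma cls_in_T: "a \<in> C \<Longrightarrow> cls a \<in> T"
  unfolding sigma_classes_def by (rule quotientI)

lemma in_cls: "a \<in> C \<Longrightarrow> a \<in> cls a"
  using sigma_refl by simp

lemma T_cases: "t \<in> T \<Longrightarrow> (\<And>a. a \<in> C \<Longrightarrow> t = cls a \<Longrightarrow> thesis) \<Longrightarrow> thesis"
  unfolding sigma_classes_def by (rule quotientE)

lemma cls_eq_iff: "a \<in> C \<Longrightarrow> b \<in> C \<Longrightarrow> cls a = cls b \<longleftrightarrow> (a, b) \<in> sigma S"
  using equiv_class_eq_iff[OF sigma_equiv] by blast

lemma T_elems_sigma:
  assumes "t \<in> T" "a \<in> t" "b \<in> t"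
  shows "(a, b) \<in> sigma S"
proof -
  obtain c where "t = cls c" using assms(1) by (rule T_cases)
  then show ?thesis using assms sigma_sym sigma_trans by blast
qed

lemma T_elem_closed: "t \<in> T \<Longrightarrow> a \<in> t \<Longrightarrow> a \<in> C"
  using T_elems_sigma sigma_closed by blast

lemma T_eq_cls:
  assumes "t \<in> T" "a \<in> t"
  shows "t = cls a"
proof -
  obtain c where "c \<in> C" "t = cls c" using assms(1) by (rule T_cases)
  then show ?thesis using assms cls_eq_iff sigma_closed by auto
qed

lemma lpa_eq_pl:
  assumes t: "t \<in> T" and e: "e \<in> P" and a: "a \<in> t" "e \<cdot> st S a = e"
  shows "lpa S t e = pl S (a \<cdot> e)"
proof -
  define c where "c = (SOME c. c \<in> t \<and> proj_le S e (st S c))"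
  have "\<exists>c. c \<in> t \<and> proj_le S e (st S c)" using a by (auto simp: proj_le_iff)
  from someI_ex[OF this] have c: "c \<in> t" "e \<cdot> st S c = e"
    unfolding c_def proj_le_iff by blast+
  have "c \<cdot> e = a \<cdot> e"
  proof (rule proper_st)
    show "(c \<cdot> e, a \<cdot> e) \<in> sigma S"
      using sigma_mul[OF T_elems_sigma[OF t c(1) a(1)] sigma_refl[of e]] e by simp
    show "st S (c \<cdot> e) = st S (a \<cdot> e)"
      using st_mul_proj_below T_elem_closed t a c e by simp
  qed
  then show ?thesis unfolding lpa_def c_def by simp
qed

end

locale total_proper_restriction_alg = proper_restriction_alg +
  assumes left_total: "left_action_total S"
begin

lemma class_element_above:
  assumes "t \<in> T" "e \<in> P"
  obtains a where "a \<in> t" "e \<cdot> st S a = e"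
proof -
  have "lpa_defined S t e" using left_total assms unfolding left_action_total_def by blast
  then obtain a where a: "a \<in> t" and le: "proj_le S e (st S a)" unfolding lpa_defined_def by blast
  from le have "e \<cdot> st S a = e" by (simp add: proj_le_iff)
  with a show thesis by (rule that)
qed

lemma lpa_cls: "a \<in> C \<Longrightarrow> e \<in> P \<Longrightarrow> e \<cdot> st S a = e \<Longrightarrow> lpa S (cls a) e = pl S (a \<cdot> e)"
  using lpa_eq_pl cls_in_T in_cls by blast

lemma lpa_st_self: "a \<in> C \<Longrightarrow> lpa S (cls a) (st S a) = pl S a"
  using lpa_cls[of a "st S a"] mul_st by simp

lemma lpa_closed:
  assumes "t \<in> T" "e \<in> P"
  shows "lpa S t e \<in> P"
proof -
  obtain a where "a \<in> t" "e \<cdot> st S a = e" using class_element_above assms .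
  then show ?thesis using lpa_eq_pl assms T_elem_closed by simp
qed

lemma lpa_inj:
  assumes t: "t \<in> T" and yz: "y \<in> P" "z \<in> P" and eq: "lpa S t y = lpa S t z"
  shows "y = z"
proof -
  obtain a where a: "a \<in> t" "y \<cdot> st S a = y" using class_element_above t yz by blast
  obtain b where b: "b \<in> t" "z \<cdot> st S b = z" using class_element_above t yz by blast
  have "a \<cdot> y = b \<cdot> z"
  proof (rule proper_pl)
    show "(a \<cdot> y, b \<cdot> z) \<in> sigma S"
      using sigma_mul[OF T_elems_sigma[OF t a(1) b(1)] sigma_proj[OF yz]] .
    show "pl S (a \<cdot> y) = pl S (b \<cdot> z)" using lpa_eq_pl t yz a b eq by simp
  qed
  moreover have "a \<in> C" "b \<in> C" using T_elem_closed t a b by auto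
  ultimately show ?thesis using st_mul_proj_below[of a y] st_mul_proj_below[of b z] yz a b by simp
qed

lemma lpa_meet:
  assumes t: "t \<in> T" and y: "y \<in> P" and z: "z \<in> P"
  shows "lpa S t (y \<cdot> z) = lpa S t y \<cdot> lpa S t z"
proof -
  obtain a where a: "a \<in> t" "y \<cdot> st S a = y" using class_element_above t y by blast
  obtain b where b: "b \<in> t" "z \<cdot> st S b = z" using class_element_above t z by blast
  have ab: "a \<in> C" "b \<in> C" using T_elem_closed t a b by auto
  define v w where "v = a \<cdot> y" and "w = b \<cdot> z"
  have vw: "v \<in> C" "w \<in> C" "st S v = y" "st S w = z"
    unfolding v_def w_def using ab y z a b st_mul_proj_below by auto
  have sigma_vw: "(v, w) \<in> sigma S"
    unfolding v_def w_def using sigma_mul[OF T_elems_sigma[OF t a(1) b(1)] sigma_proj[OF y z]] .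
  have "(y \<cdot> z) \<cdot> st S a = (y \<cdot> st S a) \<cdot> z"
    using y z ab proj_comm[of z "st S a"] by simp
  then have "(y \<cdot> z) \<cdot> st S a = y \<cdot> z" using a(2) by simp
  then have lhs: "lpa S t (y \<cdot> z) = pl S (v \<cdot> z)"
    unfolding v_def using lpa_eq_pl t y z a(1) ab by simp
  \<comment> \<open>Compatibility of \<open>v \<sigma> w\<close> gives \<open>v z = w y\<close> and \<open>v\<^sup>+ w = w\<^sup>+ v\<close>, whose \<open>+\<close> is both
    \<open>v\<^sup>+ w\<^sup>+\<close> and \<open>(v z)\<^sup>+\<close>.\<close>
  have vz_wy: "v \<cdot> z = w \<cdot> y" using compatible_st[OF sigma_vw] vw by simp
  define x where "x = pl S v \<cdot> w"
  have "st S x \<cdot> z = st S x" unfolding x_def using st_mul_le[of "pl S v" w] vw by simp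
  then have "x \<cdot> z = x" using mul_proj_absorb[of x z] vw z unfolding x_def by simp
  then have x_eq: "x = pl S w \<cdot> (v \<cdot> z)"
    using compatible_pl[OF sigma_vw] vw z unfolding x_def by simp
  have "lpa S t y \<cdot> lpa S t z = pl S v \<cdot> pl S w"
    unfolding v_def w_def using lpa_eq_pl t y z a b by simp
  also have "\<dots> = pl S x" unfolding x_def using pl_pl_mul vw by simp
  also have "\<dots> = pl S w \<cdot> pl S (w \<cdot> y)" using x_eq pl_pl_mul vz_wy vw y by simp
  also have "\<dots> = pl S (w \<cdot> y)" using pl_mul_le vw y by simp
  finally show ?thesis using lhs vz_wy by simp
qed

lemma lpa_order_iff:
  assumes "t \<in> T" "y \<in> P" "z \<in> P"
  shows "y \<cdot> z = y \<longleftrightarrow> lpa S t y \<cdot> lpa S t z = lpa S t y"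
proof
  assume "y \<cdot> z = y"
  then show "lpa S t y \<cdot> lpa S t z = lpa S t y" using lpa_meet[OF assms] by simp
next
  assume "lpa S t y \<cdot> lpa S t z = lpa S t y"
  then have "lpa S t (y \<cdot> z) = lpa S t y" using lpa_meet[OF assms] by simp
  then show "y \<cdot> z = y" using lpa_inj[OF assms(1)] assms by simp
qed

lemma lpa_range_ideal:
  assumes t: "t \<in> T" and y: "y \<in> P" and z: "z \<in> P" and z_le: "z \<cdot> lpa S t y = z"
  shows "z \<in> lpa S t ` P"
proof -
  obtain a where a: "a \<in> t" "y \<cdot> st S a = y" using class_element_above t y by blast
  have aC: "a \<in> C" using a T_elem_closed t by auto
  \<comment> \<open>The preimage of \<open>z\<close> is the domain of \<open>z a y\<close>.\<close>
  define x where "x = z \<cdot> (a \<cdot> y)"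
  define w where "w = st S x"
  have xC: "x \<in> C" and wP: "w \<in> P" unfolding x_def w_def using aC y z by auto
  have wy: "w \<cdot> y = w" unfolding w_def x_def using st_mul_le[of "z \<cdot> a" y] aC y z by simp
  have "w \<cdot> st S a = w \<cdot> (y \<cdot> st S a)" using wy wP y aC by (simp flip: mul_assoc)
  then have w_le: "w \<cdot> st S a = w" using a(2) wy by simp
  have "(x, a \<cdot> y) \<in> sigma S" unfolding x_def using sigma_proj_mul aC y z by simp
  then have "(x, a) \<in> sigma S" using sigma_trans sigma_mul_proj[of a y] aC y by blast
  then have "(x \<cdot> w, a \<cdot> w) \<in> sigma S" using sigma_mul sigma_refl wP by blast
  then have "(x, a \<cdot> w) \<in> sigma S" unfolding w_def using mul_st[of x x] xC by simp
  moreover have "st S x = st S (a \<cdot> w)" using st_mul_proj_below aC wP w_le unfolding w_def by simp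
  ultimately have "x = a \<cdot> w" by (rule proper_st)
  then have "lpa S t w = pl S x" using lpa_eq_pl t wP a(1) w_le by simp
  also have "\<dots> = z" unfolding x_def using pl_proj_mul[of "a \<cdot> y" z] aC y z z_le lpa_eq_pl t a by simp
  finally show ?thesis using wP by (blast intro: sym)
qed

lemma lpa_proj_class: "e \<in> P \<Longrightarrow> f \<in> P \<Longrightarrow> lpa S (cls e) f = f"
  using lpa_cls[of f f] cls_eq_iff[of e f] sigma_proj[of e f] by simp

lemma lpa_mul:
  assumes a: "a \<in> C" and b: "b \<in> C" and e: "e \<in> P"
  shows "lpa S (cls (a \<cdot> b)) e = lpa S (cls a) (lpa S (cls b) e)"
proof -
  obtain b' where b': "b' \<in> cls b" "e \<cdot> st S b' = e" using class_element_above[OF cls_in_T[OF b] e] .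
  define f where "f = pl S (b' \<cdot> e)"
  have b'C: "b' \<in> C" using b' sigma_closed by auto
  have f: "f \<in> P" unfolding f_def using b'C e by simp
  obtain a' where a': "a' \<in> cls a" "f \<cdot> st S a' = f" using class_element_above[OF cls_in_T[OF a] f] .
  have a'C: "a' \<in> C" using a' sigma_closed by auto
  have inner: "lpa S (cls b) e = f" unfolding f_def using lpa_eq_pl[OF cls_in_T[OF b] e b'] .
  have outer: "lpa S (cls a) f = pl S (a' \<cdot> (b' \<cdot> e))"
    using lpa_eq_pl[OF cls_in_T[OF a] f a'] pl_mul_pl[of a' "b' \<cdot> e"] a'C b'C e
    unfolding f_def by simp
  have "st S a' \<cdot> f = f" using a'(2) proj_comm[of f "st S a'"] a'C f by simp
  then have "st S (a' \<cdot> (b' \<cdot> e)) = e"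
    using st_mul_if_pl_below_st[of a' "b' \<cdot> e"] st_mul_proj_below[of b' e] a'C b'C e b'(2)
    unfolding f_def by simp
  then have "e \<cdot> st S (a' \<cdot> b') = e"
    using st_mul_proj[of "a' \<cdot> b'" e] proj_comm[of e "st S (a' \<cdot> b')"] a'C b'C e by simp
  then have "lpa S (cls (a' \<cdot> b')) e = pl S (a' \<cdot> (b' \<cdot> e))"
    using lpa_cls[of "a' \<cdot> b'" e] a'C b'C e by simp
  moreover have "cls (a \<cdot> b) = cls (a' \<cdot> b')"
    using cls_eq_iff sigma_mul a' b' a'C b'C a b by simp
  ultimately show ?thesis using inner outer by simp
qed

definition class_mul :: "'a set \<Rightarrow> 'a set \<Rightarrow> 'a set" where
  "class_mul t s = cls ((SOME a. a \<in> t) \<cdot> (SOME b. b \<in> s))"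

definition proj_class :: "'a set" where
  "proj_class = cls (st S (SOME a. a \<in> C))"

definition W_embed :: "'a \<Rightarrow> 'a \<times> 'a set" where
  "W_embed a = (pl S a, cls a)"

abbreviation W_quotient where "W_quotient \<equiv> W_alg T class_mul proj_class P (mul S) (lpa S)"

lemma class_mul_cls:
  assumes "a \<in> C" "b \<in> C"
  shows "class_mul (cls a) (cls b) = cls (a \<cdot> b)"
proof -
  have "(SOME x. x \<in> cls c) \<in> cls c" if "c \<in> C" for c using in_cls[OF that] by (rule someI)
  then have "(a, SOME x. x \<in> cls a) \<in> sigma S" "(b, SOME x. x \<in> cls b) \<in> sigma S"
    using assms by auto
  then show ?thesis
    unfolding class_mul_def using cls_eq_iff sigma_mul sigma_closed by (metis sigma_sym)
qed

lemma
  assumes "C \<noteq> {}"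
  shows proj_class_in_T: "proj_class \<in> T"
    and cls_proj: "e \<in> P \<Longrightarrow> cls e = proj_class"
proof -
  have "st S (SOME a. a \<in> C) \<in> P" using assms by (simp add: some_in_eq)
  then show "proj_class \<in> T" "e \<in> P \<Longrightarrow> cls e = proj_class"
    unfolding proj_class_def using cls_in_T cls_eq_iff sigma_proj by auto
qed

lemma W_data_quotient:
  assumes "C \<noteq> {}"
  shows "W_data T class_mul proj_class P (mul S) (lpa S)"
  unfolding W_data_def
proof (intro conjI ballI)
  show "proj_class \<in> T" using proj_class_in_T assms .
  fix t s r assume "t \<in> T" "s \<in> T" "r \<in> T"
  then obtain a b c where "a \<in> C" "b \<in> C" "c \<in> C" "t = cls a" "s = cls b" "r = cls c"
    by (metis T_cases)
  then show "class_mul t s \<in> T" "class_mul (class_mul t s) r = class_mul t (class_mul s r)"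
    and "\<And>y. y \<in> P \<Longrightarrow> lpa S (class_mul t s) y = lpa S t (lpa S s y)"
    using class_mul_cls cls_in_T lpa_mul by simp_all
next
  fix t assume "t \<in> T"
  then obtain a where a: "a \<in> C" "t = cls a" by (metis T_cases)
  obtain e where e: "e \<in> P" using assms by blast
  have "proj_class = cls e" using cls_proj assms e by simp
  moreover have "cls (e \<cdot> a) = cls a" "cls (a \<cdot> e) = cls a"
    using a e cls_eq_iff sigma_proj_mul sigma_mul_proj by simp_all
  ultimately show "class_mul proj_class t = t" "class_mul t proj_class = t"
    using a e class_mul_cls by simp_all
next
  fix y assume "y \<in> P"
  then show "lpa S proj_class y = y" using cls_proj[OF assms] lpa_proj_class by metis
next
  fix x y assume "x \<in> P" "y \<in> P"
  then show "x \<cdot> y \<in> P" "x \<cdot> y = y \<cdot> x" using proj_comm by simp_all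
next
  fix x y z assume "x \<in> P" "y \<in> P" "z \<in> P"
  then show "(x \<cdot> y) \<cdot> z = x \<cdot> (y \<cdot> z)" by simp
next
  fix x assume "x \<in> P"
  then show "x \<cdot> x = x" by simp
next
  fix t y assume "t \<in> T" "y \<in> P"
  then show "lpa S t y \<in> P" by (rule lpa_closed)
next
  fix t y z assume "t \<in> T" "y \<in> P" "z \<in> P"
  then show "(y \<cdot> z = y) = (lpa S t y \<cdot> lpa S t z = lpa S t y)"
    and "z \<cdot> lpa S t y = z \<longrightarrow> z \<in> lpa S t ` P"
    using lpa_order_iff lpa_range_ideal by blast+
qed

lemma pl_mul_lpa_pl:
  assumes a: "a \<in> C" and b: "b \<in> C"
  shows "pl S a \<cdot> lpa S (cls a) (pl S b) = pl S (a \<cdot> b)"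
proof -
  have le: "(st S a \<cdot> pl S b) \<cdot> st S a = st S a \<cdot> pl S b"
    using a b proj_comm[of "pl S b" "st S a"] proj_left_idem by simp
  have "pl S a \<cdot> lpa S (cls a) (pl S b) = lpa S (cls a) (st S a \<cdot> pl S b)"
    using lpa_meet[OF cls_in_T[OF a]] lpa_st_self a b by simp
  also have "\<dots> = pl S (a \<cdot> pl S b)"
    using lpa_cls[OF _ _ le] a b mul_st[of a a] by (simp flip: mul_assoc)
  also have "\<dots> = pl S (a \<cdot> b)" using pl_mul_pl a b by simp
  finally show ?thesis .
qed

lemma W_embed_image: "W_embed ` C = {(lpa S t y, t) | y t. y \<in> P \<and> t \<in> T}"
proof (intro equalityI subsetI)
  fix x assume "x \<in> W_embed ` C"
  then obtain a where "a \<in> C" "x = W_embed a" by blast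
  then show "x \<in> {(lpa S t y, t) | y t. y \<in> P \<and> t \<in> T}"
    unfolding W_embed_def using lpa_st_self cls_in_T by force
next
  fix x assume "x \<in> {(lpa S t y, t) | y t. y \<in> P \<and> t \<in> T}"
  then obtain y t where yt: "y \<in> P" "t \<in> T" "x = (lpa S t y, t)" by blast
  obtain b where b: "b \<in> t" "y \<cdot> st S b = y" using class_element_above yt by blast
  have bC: "b \<in> C" using b T_elem_closed yt by blast
  have "t = cls b" using T_eq_cls yt b by blast
  also have "\<dots> = cls (b \<cdot> y)"
    using cls_eq_iff[of b "b \<cdot> y"] sigma_sym[OF sigma_mul_proj[OF bC yt(1)]] bC yt by simp
  finally have "t = cls (b \<cdot> y)" .
  moreover have "lpa S t y = pl S (b \<cdot> y)" using lpa_eq_pl yt b by simp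
  ultimately have "x = W_embed (b \<cdot> y)" unfolding W_embed_def using yt by simp
  then show "x \<in> W_embed ` C" using bC yt by simp
qed

lemma isomorphic_W_quotient:
  assumes "C \<noteq> {}"
  shows "isomorphic S W_quotient"
  unfolding isomorphic_def
proof (intro exI[of _ W_embed] conjI ballI)
  have "inj_on W_embed C" unfolding inj_on_def W_embed_def using proper_pl cls_eq_iff by auto
  then show "bij_betw W_embed C (carr W_quotient)"
    unfolding bij_betw_def W_alg_def using W_embed_image by simp
next
  fix x y assume "x \<in> C" "y \<in> C"
  then show "W_embed (x \<cdot> y) = mul W_quotient (W_embed x) (W_embed y)"
    unfolding W_alg_def W_embed_def using pl_mul_lpa_pl class_mul_cls by simp
next
  fix x assume x: "x \<in> C"
  have "(THE y. y \<in> P \<and> lpa S (cls x) y = pl S x) = st S x"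
  proof (rule the_equality)
    show "st S x \<in> P \<and> lpa S (cls x) (st S x) = pl S x" using x lpa_st_self by simp
    fix y assume "y \<in> P \<and> lpa S (cls x) y = pl S x"
    then show "y = st S x" using lpa_inj[of "cls x" y "st S x"] lpa_st_self x cls_in_T by simp
  qed
  then show "W_embed (st S x) = st W_quotient (W_embed x)"
    unfolding W_alg_def W_embed_def using cls_proj[OF assms] x by simp
  show "W_embed (pl S x) = pl W_quotient (W_embed x)"
    unfolding W_alg_def W_embed_def using cls_proj[OF assms] x by simp
qed

end

locale W_product =
  fixes T :: "'t set" and tm :: "'t \<Rightarrow> 't \<Rightarrow> 't" and u :: 't
    and Y :: "'y set" and meet :: "'y \<Rightarrow> 'y \<Rightarrow> 'y" and act :: "'t \<Rightarrow> 'y \<Rightarrow> 'y"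
  assumes W_data: "W_data T tm u Y meet act"
begin

lemma tm_unit_left: "t \<in> T \<Longrightarrow> tm u t = t"
  and meet_comm: "x \<in> Y \<Longrightarrow> y \<in> Y \<Longrightarrow> meet x y = meet y x"
  and meet_idem: "x \<in> Y \<Longrightarrow> meet x x = x"
  and act_closed: "t \<in> T \<Longrightarrow> y \<in> Y \<Longrightarrow> act t y \<in> Y"
  and act_unit: "y \<in> Y \<Longrightarrow> act u y = y"
  and act_order_iff: "t \<in> T \<Longrightarrow> y \<in> Y \<Longrightarrow> z \<in> Y \<Longrightarrow>
    meet y z = y \<longleftrightarrow> meet (act t y) (act t z) = act t y"
  by (insert W_data, simp_all add: W_data_def)

lemma act_inj:
  assumes t: "t \<in> T" and yz: "y \<in> Y" "z \<in> Y" and eq: "act t y = act t z"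
  shows "y = z"
proof -
  have "meet y z = y" using act_order_iff[OF t yz] eq meet_idem act_closed t yz by simp
  moreover have "meet z y = z" using act_order_iff[OF t yz(2,1)] eq meet_idem act_closed t yz by simp
  ultimately show ?thesis using meet_comm yz by simp
qed

abbreviation W where "W \<equiv> W_alg T tm u Y meet act"

lemma carr_W: "carr W = {(act t y, t) | y t. y \<in> Y \<and> t \<in> T}"
  and mul_W: "mul W (x, t) (y, s) = (meet x (act t y), tm t s)"
  and pl_W: "pl W (x, t) = (x, u)"
  unfolding W_alg_def by simp_all

lemma st_W:
  assumes "t \<in> T" "y \<in> Y"
  shows "st W (act t y, t) = (y, u)"
proof -
  have "(THE z. z \<in> Y \<and> act t z = act t y) = y" using act_inj assms by (intro the_equality) auto
  then show ?thesis unfolding W_alg_def by simp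
qed

end

locale W_isomorphism = restriction_alg S + W_product T tm u Y meet act
  for S :: "('a, 'b) r_alg_scheme" and T :: "'t set" and tm u and Y :: "'y set" and meet act +
  fixes f :: "'a \<Rightarrow> 'y \<times> 't"
  assumes f_bij: "bij_betw f (carr S) (carr (W_alg T tm u Y meet act))"
    and f_mul: "x \<in> carr S \<Longrightarrow> y \<in> carr S \<Longrightarrow> f (mul S x y) = mul (W_alg T tm u Y meet act) (f x) (f y)"
    and f_st: "x \<in> carr S \<Longrightarrow> f (st S x) = st (W_alg T tm u Y meet act) (f x)"
    and f_pl: "x \<in> carr S \<Longrightarrow> f (pl S x) = pl (W_alg T tm u Y meet act) (f x)"
begin

lemma f_inj: "a \<in> C \<Longrightarrow> b \<in> C \<Longrightarrow> f a = f b \<Longrightarrow> a = b"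
  using f_bij unfolding bij_betw_def inj_on_def by blast

lemma f_cases:
  assumes "a \<in> C"
  obtains t y where "t \<in> T" "y \<in> Y" "f a = (act t y, t)"
proof -
  have "f a \<in> carr W" using f_bij assms unfolding bij_betw_def by blast
  then show thesis using that unfolding carr_W by blast
qed

lemma f_surj:
  assumes "t \<in> T" "y \<in> Y"
  obtains a where "a \<in> C" "f a = (act t y, t)"
proof -
  have "(act t y, t) \<in> carr W" unfolding carr_W using assms by blast
  then have "(act t y, t) \<in> f ` C" using f_bij unfolding bij_betw_def by simp
  then obtain a where "a \<in> C" "(act t y, t) = f a" by (rule imageE)
  then show thesis using that by simp
qed

lemma f_st_eq: "a \<in> C \<Longrightarrow> t \<in> T \<Longrightarrow> y \<in> Y \<Longrightarrow> f a = (act t y, t) \<Longrightarrow> f (st S a) = (y, u)"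
  using f_st st_W by simp

lemma f_proj_cases:
  assumes "e \<in> P"
  obtains z where "z \<in> Y" "f e = (z, u)"
proof -
  obtain x where x: "x \<in> C" "e = st S x" using assms unfolding projections_def by blast
  obtain t y where "t \<in> T" "y \<in> Y" "f x = (act t y, t)" using f_cases x(1) by blast
  then have "f e = (y, u)" using f_st_eq x by simp
  then show thesis using that \<open>y \<in> Y\<close> by blast
qed

lemma sigma_iff_same_component:
  assumes a: "a \<in> C" and b: "b \<in> C"
  shows "(a, b) \<in> sigma S \<longleftrightarrow> snd (f a) = snd (f b)"
proof -
  obtain t y where t: "t \<in> T" "y \<in> Y" and fa: "f a = (act t y, t)" using f_cases a by blast
  obtain s x where s: "s \<in> T" "x \<in> Y" and fb: "f b = (act s x, s)" using f_cases b by blast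
  have f_proj_mul: "f (e \<cdot> c) = (meet z (act r v), r)"
    if "e \<in> P" "f e = (z, u)" "c \<in> C" "f c = (act r v, r)" "r \<in> T" "v \<in> Y" for e z c r v
    using that f_mul mul_W tm_unit_left act_unit act_closed by simp
  show ?thesis
  proof
    assume "(a, b) \<in> sigma S"
    then obtain e where e: "e \<in> P" "e \<cdot> a = e \<cdot> b" using sigma_iff by blast
    obtain z where fe: "f e = (z, u)" using f_proj_cases e by blast
    have "f (e \<cdot> a) = (meet z (act t y), t)" "f (e \<cdot> b) = (meet z (act s x), s)"
      using f_proj_mul[OF e(1) fe a fa t] f_proj_mul[OF e(1) fe b fb s] .
    then show "snd (f a) = snd (f b)" using e(2) fa fb by simp
  next
    assume "snd (f a) = snd (f b)"
    then have "s = t" using fa fb by simp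
    \<comment> \<open>The witness is \<open>a\<^sup>+ b\<^sup>+\<close>.\<close>
    have "pl S a \<in> P" "pl S b \<in> P" "f (pl S a) = (act t y, u)" "f (pl S b) = (act t x, u)"
      using a b fa fb f_pl pl_W \<open>s = t\<close> by simp_all
    then have "f (pl S b \<cdot> a) = f (pl S a \<cdot> b)"
      using f_proj_mul a b fa fb t s \<open>s = t\<close> meet_comm act_closed by simp
    then have "pl S b \<cdot> a = pl S a \<cdot> b" by (rule f_inj[rotated 2]) (use a b in simp_all)
    moreover have "(pl S a \<cdot> pl S b) \<cdot> a = pl S b \<cdot> a"
      using proj_left_comm[of "pl S a" "pl S b" a] pl_mul[of a a] a b by simp
    moreover have "(pl S a \<cdot> pl S b) \<cdot> b = pl S a \<cdot> b" using pl_mul[of b b] a b by simp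
    ultimately have "(pl S a \<cdot> pl S b) \<cdot> a = (pl S a \<cdot> pl S b) \<cdot> b" by simp
    then show "(a, b) \<in> sigma S" using sigma_iff a b by blast
  qed
qed

lemma f_surj_same_class:
  assumes a: "a \<in> C" "f a = (act t y, t)" and t: "t \<in> T" "y \<in> Y" and z: "z \<in> Y"
  obtains b where "b \<in> C" "(a, b) \<in> sigma S" "f b = (act t z, t)" "f (st S b) = (z, u)"
proof -
  obtain b where b: "b \<in> C" "f b = (act t z, t)" using f_surj t z by blast
  then show thesis using that sigma_iff_same_component a f_st_eq t z by simp
qed

lemma W_proper: "proper S"
  unfolding proper_def
proof (intro ballI)
  fix a b assume ab: "a \<in> C" "b \<in> C"
  obtain t y where t: "t \<in> T" "y \<in> Y" and fa: "f a = (act t y, t)" using f_cases ab by blast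
  obtain s x where s: "s \<in> T" "x \<in> Y" and fb: "f b = (act s x, s)" using f_cases ab by blast
  have "a = b" if "(a, b) \<in> sigma S" and "st S a = st S b \<or> pl S a = pl S b"
  proof -
    have "s = t" using that(1) sigma_iff_same_component ab fa fb by simp
    moreover have "f (st S a) = (y, u)" "f (st S b) = (x, u)"
      "f (pl S a) = (act t y, u)" "f (pl S b) = (act s x, u)"
      using f_st_eq[OF _ t fa] f_st_eq[OF _ s fb] f_pl pl_W fa fb ab by simp_all
    ultimately have "f a = f b" using that(2) fa fb by auto
    then show ?thesis using f_inj ab by blast
  qed
  then show "(st S a = st S b \<and> (a, b) \<in> sigma S \<longrightarrow> a = b) \<and>
    (pl S a = pl S b \<and> (a, b) \<in> sigma S \<longrightarrow> a = b)" by blast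
qed

lemma W_left_total: "left_action_total S"
  unfolding left_action_total_def lpa_defined_def proj_le_iff
proof (intro ballI)
  fix t' e assume t': "t' \<in> sigma_classes S" and e: "e \<in> P"
  obtain a where a: "a \<in> C" "t' = sigma S `` {a}"
    using t' unfolding sigma_classes_def by (rule quotientE)
  obtain t y where t: "t \<in> T" "y \<in> Y" "f a = (act t y, t)" using f_cases a by blast
  obtain z where z: "z \<in> Y" "f e = (z, u)" using f_proj_cases e by blast
  obtain b where b: "b \<in> C" "(a, b) \<in> sigma S" "f (st S b) = (z, u)"
    using f_surj_same_class[OF a(1) t(3) t(1,2) z(1)] by blast
  have "e = st S b" by (rule f_inj) (use e b z in simp_all)
  then show "\<exists>b\<in>t'. e \<cdot> st S b = e" using a b by (intro bexI[of _ b]) simp_all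
qed

end

sublocale W_isomorphism \<subseteq> total_proper_restriction_alg
  by unfold_locales (rule W_proper, rule W_left_total)

context W_isomorphism
begin

lemma lpa_surj_if_automorphic:
  assumes automorphic: "\<forall>t\<in>T. act t ` Y = Y" and t': "t' \<in> sigma_classes S"
  shows "P \<subseteq> lpa S t' ` P"
proof
  fix e assume e: "e \<in> P"
  obtain a where a: "a \<in> C" "t' = cls a" using t' by (rule T_cases)
  obtain t y where t: "t \<in> T" "y \<in> Y" "f a = (act t y, t)" using f_cases a by blast
  obtain z' where z': "z' \<in> Y" "f e = (z', u)" using f_proj_cases e by blast
  have "z' \<in> act t ` Y" using automorphic t z' by simp
  then obtain z where z: "z' = act t z" "z \<in> Y" by (rule imageE)
  obtain b where b: "b \<in> C" "(a, b) \<in> sigma S" "f b = (act t z, t)"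
    using f_surj_same_class[OF a(1) t(3) t(1,2) z(2)] by blast
  have "t' = cls b" using a b cls_eq_iff by simp
  then have "lpa S t' (st S b) = pl S b" using lpa_st_self b by simp
  moreover have "pl S b = e" by (rule f_inj) (use f_pl pl_W b e z z' in simp_all)
  ultimately have "e = lpa S t' (st S b)" by simp
  then show "e \<in> lpa S t' ` P" using st_in_proj[OF b(1)] by (rule image_eqI)
qed

end


context total_proper_restriction_alg
begin

lemma order_automorphisms_iff_surj:
  "left_action_by_order_automorphisms S \<longleftrightarrow> (\<forall>t\<in>T. P \<subseteq> lpa S t ` P)"
proof
  assume automorphic: "left_action_by_order_automorphisms S"
  show "\<forall>t\<in>T. P \<subseteq> lpa S t ` P"
  proof
    fix t assume "t \<in> T"
    then have "bij_betw (lpa S t) P P"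
      using automorphic unfolding left_action_by_order_automorphisms_def by blast
    then show "P \<subseteq> lpa S t ` P" by (simp add: bij_betw_imp_surj_on)
  qed
next
  assume surj: "\<forall>t\<in>T. P \<subseteq> lpa S t ` P"
  show "left_action_by_order_automorphisms S"
    unfolding left_action_by_order_automorphisms_def
  proof (intro conjI ballI)
    fix t assume t: "t \<in> T"
    have "inj_on (lpa S t) P" by (intro inj_onI) (rule lpa_inj[OF t])
    moreover have "lpa S t ` P = P"
      using lpa_closed[OF t] surj t by (intro equalityI image_subsetI) auto
    ultimately show "bij_betw (lpa S t) P P" unfolding bij_betw_def by blast
    fix e f assume "e \<in> P" "f \<in> P"
    then show "proj_le S e f \<longleftrightarrow> proj_le S (lpa S t e) (lpa S t f)"
      unfolding proj_le_iff by (rule lpa_order_iff[OF t])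
  qed (rule left_total)
qed

lemma right_total_iff_surj: "right_action_total S \<longleftrightarrow> (\<forall>t\<in>T. P \<subseteq> lpa S t ` P)"
proof -
  have "rpa_defined S e t \<longleftrightarrow> e \<in> lpa S t ` P" if "t \<in> T" for e t
  proof -
    have "lpa_defined S t f" if "f \<in> P" for f
      using left_total \<open>t \<in> T\<close> that unfolding left_action_total_def by blast
    then show ?thesis unfolding rpa_defined_def by (auto simp: image_iff)
  qed
  then show ?thesis unfolding right_action_total_def subset_eq by simp
qed

end

lemma W_data_trivial: "W_data {u} (\<lambda>_ _. u) u {} meet act"
  and SD_data_trivial: "SD_data {u} (\<lambda>_ _. u) u {} meet act"
  unfolding SD_data_def W_data_def by simp_all

lemma isomorphic_empty_W:
  assumes "carr S = {}"
  shows "isomorphic S (W_alg T tm u {} meet act)"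
  using assms unfolding isomorphic_def bij_betw_def W_alg_def by simp

lemma obtain_W_isomorphism:
  assumes "restriction_semigroup S" "W_data T tm u Y meet act"
    and "isomorphic S (W_alg T tm u Y meet act)"
  obtains f where "W_isomorphism S T tm u Y meet act f"
proof -
  obtain f where "bij_betw f (carr S) (carr (W_alg T tm u Y meet act))"
    "\<forall>x\<in>carr S. \<forall>y\<in>carr S. f (mul S x y) = mul (W_alg T tm u Y meet act) (f x) (f y)"
    "\<forall>x\<in>carr S. f (st S x) = st (W_alg T tm u Y meet act) (f x) \<and>
      f (pl S x) = pl (W_alg T tm u Y meet act) (f x)"
    using assms(3) unfolding isomorphic_def by blast
  then have "W_isomorphism S T tm u Y meet act f" by unfold_locales (use assms in auto)
  then show thesis by (rule that)
qed

lemma W_product_imp_proper_left_total: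
  assumes "restriction_semigroup S" "W_data T tm u Y meet act"
    and "isomorphic S (W_alg T tm u Y meet act)"
  shows "proper S \<and> left_action_total S"
proof -
  obtain f where "W_isomorphism S T tm u Y meet act f" using obtain_W_isomorphism[OF assms] .
  then interpret W_isomorphism S T tm u Y meet act f .
  show ?thesis using proper left_total by blast
qed

lemma semidirect_product_imp_proper_automorphic:
  assumes "restriction_semigroup S" "SD_data T tm u Y meet act"
    and "isomorphic S (W_alg T tm u Y meet act)"
  shows "proper S \<and> left_action_by_order_automorphisms S"
proof -
  have W: "W_data T tm u Y meet act" and automorphic: "\<forall>t\<in>T. act t ` Y = Y"
    using assms(2) unfolding SD_data_def by blast+
  obtain f where "W_isomorphism S T tm u Y meet act f"
    using obtain_W_isomorphism[OF assms(1) W assms(3)] .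
  then interpret W_isomorphism S T tm u Y meet act f .
  show ?thesis using proper order_automorphisms_iff_surj lpa_surj_if_automorphic[OF automorphic] by blast
qed

lemma iso_to_W_product_iff:
  assumes "restriction_semigroup S"
  shows "iso_to_W_product S \<longleftrightarrow> proper S \<and> left_action_total S"
proof
  assume "iso_to_W_product S"
  then show "proper S \<and> left_action_total S"
    unfolding iso_to_W_product_def
    by (elim exE conjE) (rule W_product_imp_proper_left_total[OF assms])
next
  assume "proper S \<and> left_action_total S"
  then interpret total_proper_restriction_alg S by unfold_locales (use assms in auto)
  show "iso_to_W_product S"
  proof (cases "carr S = {}")
    case True
    show ?thesis unfolding iso_to_W_product_def
      by (intro exI conjI) (rule W_data_trivial, rule isomorphic_empty_W[OF True])
  next
    case False
    show ?thesis unfolding iso_to_W_product_def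
      by (intro exI conjI) (rule W_data_quotient[OF False], rule isomorphic_W_quotient[OF False])
  qed
qed

lemma iso_to_semidirect_product_iff:
  assumes "restriction_semigroup S"
  shows "iso_to_semidirect_product S \<longleftrightarrow> proper S \<and> left_action_by_order_automorphisms S"
proof
  assume "iso_to_semidirect_product S"
  then show "proper S \<and> left_action_by_order_automorphisms S"
    unfolding iso_to_semidirect_product_def
    by (elim exE conjE) (rule semidirect_product_imp_proper_automorphic[OF assms])
next
  assume automorphic: "proper S \<and> left_action_by_order_automorphisms S"
  then interpret total_proper_restriction_alg S
    by unfold_locales (use assms in \<open>auto simp: left_action_by_order_automorphisms_def\<close>)
  show "iso_to_semidirect_product S"
  proof (cases "carr S = {}")
    case True
    show ?thesis unfolding iso_to_semidirect_product_def
      by (intro exI conjI) (rule SD_data_trivial, rule isomorphic_empty_W[OF True])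
  next
    case False
    have onto: "\<forall>t\<in>T. lpa S t ` P = P"
      using automorphic unfolding left_action_by_order_automorphisms_def bij_betw_def by blast
    show ?thesis unfolding iso_to_semidirect_product_def SD_data_def
      by (intro exI conjI)
        (rule W_data_quotient[OF False], rule onto, rule isomorphic_W_quotient[OF False])
  qed
qed

lemma order_automorphisms_iff_right_total:
  assumes "restriction_semigroup S"
  shows "proper S \<and> left_action_by_order_automorphisms S \<longleftrightarrow>
    proper S \<and> left_action_total S \<and> right_action_total S"
proof (cases "proper S \<and> left_action_total S")
  case True
  then interpret total_proper_restriction_alg S by unfold_locales (use assms in auto)
  show ?thesis using order_automorphisms_iff_surj right_total_iff_surj True by blast
next
  case False
  then show ?thesis unfolding left_action_by_order_automorphisms_def by blast
qed

theorem proposition3p3: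
  fixes S :: "'a r_alg"
  assumes "restriction_semigroup S"
  shows
    "(iso_to_W_product S \<longleftrightarrow> proper S \<and> left_action_total S) \<and>
     (\<forall>(T :: 't set) tm u (Y :: 'y set) meet act.
        W_data T tm u Y meet act \<and> isomorphic S (W_alg T tm u Y meet act)
        \<longrightarrow> proper S \<and> left_action_total S) \<and>
     (iso_to_semidirect_product S \<longleftrightarrow> proper S \<and> left_action_by_order_automorphisms S) \<and>
     (iso_to_semidirect_product S \<longleftrightarrow>
        proper S \<and> left_action_total S \<and> right_action_total S) \<and>
     (\<forall>(T :: 't set) tm u (Y :: 'y set) meet act.
        SD_data T tm u Y meet act \<and> isomorphic S (W_alg T tm u Y meet act)
        \<longrightarrow> proper S \<and> left_action_by_order_automorphisms S)"
proof -
  have "\<forall>(T :: 't set) tm u (Y :: 'y set) meet act.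
      W_data T tm u Y meet act \<and> isomorphic S (W_alg T tm u Y meet act)
      \<longrightarrow> proper S \<and> left_action_total S"
    by (intro allI impI, elim conjE) (rule W_product_imp_proper_left_total[OF assms])
  moreover have "\<forall>(T :: 't set) tm u (Y :: 'y set) meet act.
      SD_data T tm u Y meet act \<and> isomorphic S (W_alg T tm u Y meet act)
      \<longrightarrow> proper S \<and> left_action_by_order_automorphisms S"
    by (intro allI impI, elim conjE) (rule semidirect_product_imp_proper_automorphic[OF assms])
  ultimately show ?thesis
    using iso_to_W_product_iff[OF assms] iso_to_semidirect_product_iff[OF assms]
      order_automorphisms_iff_right_total[OF assms]
    by simp
qed

end
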